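(* Let $3\leq d\leq k$ be integers. Then in every connected $k$-colouring of the edges of $K_n$ there is a copy of $K_d$ whose edges receive at least $d$ distinct colours. Moreover, for all sufficiently large $n$ there exists a connected $k$-colouring of the edges of $K_n$ in which no copy of $K_d$ has edges of more than $d$ distinct colours.
   Context: A $k$-colouring of the edges of the complete graph $K_n$ (colours from $\{1,\dots,k\}$) is called connected if for each colour $i$ the edges of colour $i$ form a connected spanning subgraph of $K_n$. *)

theory Defs
  imports Main
begin

definition Kedges :: "nat \<Rightarrow> nat set set" where
  "Kedges n = {{u, v} | u v. u < n \<and> v < n \<and> u \<noteq> v}"

definition edge_colouring :: "nat \<Rightarrow> nat \<Rightarrow> (nat set \<Rightarrow> nat) \<Rightarrow> bool" where
  "edge_colouring n k c \<longleftrightarrow> (\<forall>e \<in> Kedges n. c e \<in> {1..k})"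

definition colour_class_connected :: "nat \<Rightarrow> (nat set \<Rightarrow> nat) \<Rightarrow> nat \<Rightarrow> bool" where
  "colour_class_connected n c i \<longleftrightarrow>
     (\<forall>u < n. \<forall>v < n. (\<lambda>x y. {x, y} \<in> Kedges n \<and> c {x, y} = i)\<^sup>*\<^sup>* u v)"

definition connected_colouring :: "nat \<Rightarrow> nat \<Rightarrow> (nat set \<Rightarrow> nat) \<Rightarrow> bool" where
  "connected_colouring n k c \<longleftrightarrow>
     edge_colouring n k c \<and> (\<forall>i \<in> {1..k}. colour_class_connected n c i)"

definition clique_colours :: "(nat set \<Rightarrow> nat) \<Rightarrow> nat set \<Rightarrow> nat set" where
  "clique_colours c S = c ` {e. \<exists>u v. e = {u, v} \<and> u \<in> S \<and> v \<in> S \<and> u \<noteq> v}"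

end

theory Submission
  imports Defs
begin

text \<open>
  If three colour classes each connect a vertex set, some triangle is rainbow. By induction on
  the vertex set, it suffices that deleting any vertex \<open>v\<close> from a rainbow-triangle-free
  colouring keeps each of these classes connected. If the class of colour \<open>X\<close> fell apart on
  \<open>V - v\<close>, every component still contains an \<open>X\<close>-neighbour of \<open>v\<close>; rainbow-freeness then
  forces all edges leaving the component of a \<open>Y\<close>-neighbour \<open>y\<close> of \<open>v\<close> to have colour
  \<open>Y\<close>, and likewise for a \<open>Z\<close>-neighbour, which gives some edge both colours.
  A rainbow triangle is grown to a \<open>K\<^sub>d\<close> with \<open>d\<close> colours one vertex at a time: a colour
  missing from the current clique is added by following an edge of that colour out of it.

  For the construction, split the vertices into blocks \<open>[0, k)\<close>, \<open>[k, 2k)\<close>, \<open>[2k, n)\<close>, give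
  vertex \<open>x\<close> the colour \<open>x mod k + 1\<close> and colour each edge by its lower endpoint, except edges
  between the first and the last block, which take the colour of their upper endpoint. A clique
  then sees at most as many colours as it has vertices. The class of colour \<open>i\<close> is connected
  through the three vertices of colour \<open>i\<close>, one per block: every vertex is joined in colour
  \<open>i\<close> to one of them, and they are joined to each other.
\<close>

definition colour_edge :: "'a set \<Rightarrow> ('a set \<Rightarrow> 'b) \<Rightarrow> 'b \<Rightarrow> 'a \<Rightarrow> 'a \<Rightarrow> bool" where
  "colour_edge V c i x y \<longleftrightarrow> x \<in> V \<and> y \<in> V \<and> x \<noteq> y \<and> c {x, y} = i"

definition colour_connected :: "'a set \<Rightarrow> ('a set \<Rightarrow> 'b) \<Rightarrow> 'b \<Rightarrow> bool" where
  "colour_connected V c i \<longleftrightarrow> (\<forall>u\<in>V. \<forall>v\<in>V. (colour_edge V c i)\<^sup>*\<^sup>* u v)"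

definition rainbow_triangle_free :: "'a set \<Rightarrow> ('a set \<Rightarrow> 'b) \<Rightarrow> bool" where
  "rainbow_triangle_free V c \<longleftrightarrow> (\<forall>x\<in>V. \<forall>y\<in>V. \<forall>z\<in>V. x \<noteq> y \<and> y \<noteq> z \<and> x \<noteq> z \<longrightarrow>
      c {x, y} = c {x, z} \<or> c {x, y} = c {y, z} \<or> c {x, z} = c {y, z})"

lemma symp_colour_edge: "symp (colour_edge V c i)"
  unfolding colour_edge_def by (auto intro: sympI simp: insert_commute)

lemma colour_edge_rtranclp_sym: "(colour_edge V c i)\<^sup>*\<^sup>* x y \<Longrightarrow> (colour_edge V c i)\<^sup>*\<^sup>* y x"
  by (rule sympD[OF symp_rtranclp[OF symp_colour_edge]])

lemma colour_connected_neighbour: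
  assumes "colour_connected V c i" "u \<in> V" "t \<in> V" "u \<noteq> t"
  obtains y where "y \<in> V" "y \<noteq> u" "c {u, y} = i"
proof -
  have "(colour_edge V c i)\<^sup>*\<^sup>* u t" using assms unfolding colour_connected_def by blast
  with \<open>u \<noteq> t\<close> obtain y where "colour_edge V c i u y" by (metis converse_rtranclpE)
  then show thesis using that unfolding colour_edge_def by blast
qed

lemma rainbow_triangle_free_subset:
  "rainbow_triangle_free V c \<Longrightarrow> W \<subseteq> V \<Longrightarrow> rainbow_triangle_free W c"
  unfolding rainbow_triangle_free_def by blast

lemma rainbow_triangle_freeD:
  assumes "rainbow_triangle_free V c" "x \<in> V" "y \<in> V" "z \<in> V" "x \<noteq> y" "y \<noteq> z" "x \<noteq> z"
  shows "c {x, y} = c {x, z} \<or> c {x, y} = c {y, z} \<or> c {x, z} = c {y, z}"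
  using assms unfolding rainbow_triangle_free_def by blast

lemma colour_constant_along_component:
  assumes rb: "rainbow_triangle_free V c" and p: "p \<in> V"
    and "(colour_edge V c i)\<^sup>*\<^sup>* s s'" and "\<not> (colour_edge V c i)\<^sup>*\<^sup>* s p"
  shows "c {p, s} = c {p, s'}"
  using assms(3,4)
proof (induction rule: rtranclp_induct)
  case base
  then show ?case by simp
next
  case (step s1 s2)
  let ?R = "colour_edge V c i"
  have reach: "?R\<^sup>*\<^sup>* s s1" "?R\<^sup>*\<^sup>* s s2" using step by auto
  have edge: "s1 \<in> V" "s2 \<in> V" "s1 \<noteq> s2" "c {s1, s2} = i"
    using \<open>?R s1 s2\<close> unfolding colour_edge_def by auto
  have off: "p \<noteq> s1" "p \<noteq> s2" using reach step.prems by auto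
  have "\<not> ?R s1 p" "\<not> ?R s2 p"
    using reach step.prems by (meson rtranclp.rtrancl_into_rtrancl)+
  then have "c {p, s1} \<noteq> i" "c {p, s2} \<noteq> i"
    using edge off p unfolding colour_edge_def by (auto simp: insert_commute)
  then have "c {p, s1} = c {p, s2}"
    using rainbow_triangle_freeD[OF rb p edge(1,2)] off edge by auto
  then show ?case using step.IH step.prems by simp
qed

lemma colour_path_exit:
  assumes "(colour_edge V c i)\<^sup>*\<^sup>* t v" "t \<in> V" "t \<noteq> v"
  shows "\<exists>x \<in> V - {v}. (colour_edge (V - {v}) c i)\<^sup>*\<^sup>* t x \<and> c {v, x} = i"
  using assms
proof (induction rule: converse_rtranclp_induct)
  case base
  then show ?case by simp
next
  case (step t s)
  show ?case
  proof (cases "s = v")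
    case True
    then show ?thesis using step by (auto simp: colour_edge_def insert_commute)
  next
    case False
    then have "colour_edge (V - {v}) c i t s" "s \<in> V"
      using step unfolding colour_edge_def by auto
    with step.IH False show ?thesis by (meson converse_rtranclp_into_rtranclp)
  qed
qed

lemma colour_between_components:
  assumes rb: "rainbow_triangle_free V c" and X: "colour_connected V c X" and v: "v \<in> V"
    and y: "y \<in> V - {v}" "c {v, y} = W" "W \<noteq> X"
    and w: "(colour_edge (V - {v}) c X)\<^sup>*\<^sup>* y w"
    and t: "t \<in> V - {v}" "\<not> (colour_edge (V - {v}) c X)\<^sup>*\<^sup>* y t"
  shows "c {w, t} = W"
proof -
  let ?R = "colour_edge (V - {v}) c X"
  have rb': "rainbow_triangle_free (V - {v}) c"
    using rb by (rule rainbow_triangle_free_subset) blast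
  obtain x where x: "x \<in> V - {v}" "?R\<^sup>*\<^sup>* t x" "c {v, x} = X"
    using colour_path_exit[of V c X t v] X t v unfolding colour_connected_def by auto
  have yx: "\<not> ?R\<^sup>*\<^sup>* y x"
    using x(2) t(2) by (meson colour_edge_rtranclp_sym rtranclp_trans)
  then have "y \<noteq> x" by auto
  have "c {y, x} \<noteq> X"
  proof
    assume "c {y, x} = X"
    then have "?R y x" using x(1) y(1) \<open>y \<noteq> x\<close> by (simp add: colour_edge_def)
    with yx show False by blast
  qed
  with \<open>y \<noteq> x\<close> have "W = c {y, x}"
    using rainbow_triangle_freeD[OF rb v, of y x] x y by auto
  also have "\<dots> = c {y, t}"
    using colour_constant_along_component[OF rb', of y X x t] x(2) y(1) yx
    by (meson colour_edge_rtranclp_sym)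
  also have "\<dots> = c {w, t}"
    using colour_constant_along_component[OF rb' t(1) w t(2)] by (simp add: insert_commute)
  finally show ?thesis by simp
qed

lemma colour_connected_remove_vertex:
  assumes rb: "rainbow_triangle_free V c" and X: "colour_connected V c X" and v: "v \<in> V"
    and y: "y \<in> V - {v}" "c {v, y} = Y" and z: "z \<in> V - {v}" "c {v, z} = Z"
    and distinct: "X \<noteq> Y" "X \<noteq> Z" "Y \<noteq> Z"
  shows "colour_connected (V - {v}) c X"
proof (rule ccontr)
  let ?R = "colour_edge (V - {v}) c X"
  assume "\<not> colour_connected (V - {v}) c X"
  then obtain p q where pq: "p \<in> V - {v}" "q \<in> V - {v}" "\<not> ?R\<^sup>*\<^sup>* p q"
    unfolding colour_connected_def by blast
  note between = colour_between_components[OF rb X v]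
  show False
  proof (cases "?R\<^sup>*\<^sup>* y z")
    case False
    have "c {y, z} = Y" using between[OF y _ rtranclp.rtrancl_refl z(1) False] distinct by simp
    moreover have "c {z, y} = Z"
      using between[OF z _ rtranclp.rtrancl_refl y(1)] False distinct colour_edge_rtranclp_sym by metis
    ultimately show False using distinct by (simp add: insert_commute)
  next
    case True
    obtain t where t: "t \<in> V - {v}" "\<not> ?R\<^sup>*\<^sup>* y t"
      using pq by (meson colour_edge_rtranclp_sym rtranclp_trans)
    have zt: "\<not> ?R\<^sup>*\<^sup>* z t" using True t(2) by (meson rtranclp_trans)
    have "c {y, t} = Y" using between[OF y _ rtranclp.rtrancl_refl t] distinct by simp
    moreover have "c {y, t} = Z"
      using between[OF z _ _ t(1) zt] True colour_edge_rtranclp_sym distinct by metis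
    ultimately show False using distinct by simp
  qed
qed

lemma three_connected_colours_rainbow_triangle:
  assumes "finite V" "2 \<le> card V"
    and "colour_connected V c X" "colour_connected V c Y" "colour_connected V c Z"
    and "X \<noteq> Y" "X \<noteq> Z" "Y \<noteq> Z"
  shows "\<not> rainbow_triangle_free V c"
  using assms
proof (induction V rule: finite_remove_induct)
  case empty
  then show ?case by simp
next
  case (remove V)
  note conn = remove.prems(2-4) and distinct = remove.prems(5-7)
  show ?case
  proof
    assume rb: "rainbow_triangle_free V c"
    obtain v u where vu: "v \<in> V" "u \<in> V" "v \<noteq> u"
      using \<open>2 \<le> card V\<close> remove.hyps(1) by (metis card_le_Suc0_iff_eq not_less_eq_eq numeral_2_eq_2)
    have neighbour: "\<exists>w \<in> V - {v}. c {v, w} = i" if "colour_connected V c i" for i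
      using colour_connected_neighbour[OF that vu] by blast
    obtain x where x: "x \<in> V - {v}" "c {v, x} = X" using neighbour[OF conn(1)] by blast
    obtain y where y: "y \<in> V - {v}" "c {v, y} = Y" using neighbour[OF conn(2)] by blast
    obtain z where z: "z \<in> V - {v}" "c {v, z} = Z" using neighbour[OF conn(3)] by blast
    show False
    proof (cases "card V = 2")
      case True
      then have "card (V - {v}) = 1" using vu(1) remove.hyps(1) by simp
      then obtain w where "V - {v} = {w}" by (rule card_1_singletonE)
      then have "x = y" using x y by simp
      then show False using x y distinct by simp
    next
      case False
      have "colour_connected (V - {v}) c X"
        by (rule colour_connected_remove_vertex[OF rb conn(1) vu(1) y z distinct])
      moreover have "colour_connected (V - {v}) c Y"
        by (rule colour_connected_remove_vertex[OF rb conn(2) vu(1) x z]) (use distinct in auto)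
      moreover have "colour_connected (V - {v}) c Z"
        by (rule colour_connected_remove_vertex[OF rb conn(3) vu(1) x y]) (use distinct in auto)
      moreover have "2 \<le> card (V - {v})" using False \<open>2 \<le> card V\<close> vu(1) remove.hyps(1) by simp
      ultimately have "\<not> rainbow_triangle_free (V - {v}) c"
        using remove.IH[OF vu(1)] remove.hyps(1) distinct by blast
      with rb show False using rainbow_triangle_free_subset by blast
    qed
  qed
qed

lemma Kedges_iff: "{x, y} \<in> Kedges n \<longleftrightarrow> x < n \<and> y < n \<and> x \<noteq> y"
  unfolding Kedges_def by (auto simp: doubleton_eq_iff)

lemma colour_class_connected_iff:
  "colour_class_connected n c i \<longleftrightarrow> colour_connected {..<n} c i"
proof -
  have "(\<lambda>x y. {x, y} \<in> Kedges n \<and> c {x, y} = i) = colour_edge {..<n} c i"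
    by (auto simp: fun_eq_iff colour_edge_def Kedges_iff)
  then show ?thesis unfolding colour_class_connected_def colour_connected_def by auto
qed

lemma connected_colouring_colour_connected:
  "connected_colouring n k c \<Longrightarrow> i \<in> {1..k} \<Longrightarrow> colour_connected {..<n} c i"
  unfolding connected_colouring_def colour_class_connected_iff by blast

lemma colour_connected_hub:
  assumes "\<And>u. u \<in> V \<Longrightarrow> (colour_edge V c i)\<^sup>*\<^sup>* u r"
  shows "colour_connected V c i"
  unfolding colour_connected_def
  using assms colour_edge_rtranclp_sym rtranclp_trans[of "colour_edge V c i"] by metis

lemma connected_colouring_colours_lt:
  assumes "connected_colouring n k c" "2 \<le> n"
  shows "k < n"
proof -
  have "{1..k} \<subseteq> (\<lambda>w. c {0, w}) ` ({..<n} - {0})"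
  proof
    fix i assume "i \<in> {1..k}"
    then obtain w where "w \<in> {..<n}" "w \<noteq> 0" "c {0, w} = i"
      using colour_connected_neighbour[OF connected_colouring_colour_connected[OF assms(1)], of i 0 1]
        assms(2) by auto
    then show "i \<in> (\<lambda>w. c {0, w}) ` ({..<n} - {0})" by auto
  qed
  then have "card {1..k} \<le> card ((\<lambda>w. c {0, w}) ` ({..<n} - {0}))"
    by (intro card_mono) auto
  also have "\<dots> \<le> card ({..<n} - {0})" by (rule card_image_le) simp
  finally have "k \<le> card ({..<n} - {0})" by simp
  then show ?thesis using assms(2) by simp
qed

lemma finite_clique_colours: "finite S \<Longrightarrow> finite (clique_colours c S)"
proof -
  assume "finite S"
  moreover have "clique_colours c S \<subseteq> c ` Pow S" unfolding clique_colours_def by auto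
  ultimately show ?thesis by (meson finite_Pow_iff finite_imageI finite_subset)
qed

lemma clique_colours_mono: "S \<subseteq> T \<Longrightarrow> clique_colours c S \<subseteq> clique_colours c T"
  unfolding clique_colours_def by blast

lemma clique_coloursI: "u \<in> S \<Longrightarrow> v \<in> S \<Longrightarrow> u \<noteq> v \<Longrightarrow> c {u, v} \<in> clique_colours c S"
  unfolding clique_colours_def by blast

lemma card_clique_colours_rainbow_triangle:
  assumes "x \<noteq> y" "y \<noteq> z" "x \<noteq> z" "c {x, y} \<noteq> c {x, z}" "c {x, y} \<noteq> c {y, z}" "c {x, z} \<noteq> c {y, z}"
  shows "3 \<le> card (clique_colours c {x, y, z})"
proof -
  have "3 = card {c {x, y}, c {x, z}, c {y, z}}" using assms by auto
  also have "\<dots> \<le> card (clique_colours c {x, y, z})"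
    using clique_coloursI[of _ "{x, y, z}"] assms by (intro card_mono finite_clique_colours) auto
  finally show ?thesis .
qed

lemma clique_colours_extend:
  assumes cc: "connected_colouring n k c" and kn: "k < n"
    and S: "S \<subseteq> {..<n}" "S \<noteq> {}" "card S < k" "card S \<le> card (clique_colours c S)"
  obtains w where "w < n" "w \<notin> S" "Suc (card S) \<le> card (clique_colours c (insert w S))"
proof -
  have finS: "finite S" using S(1) finite_subset by blast
  have "S \<noteq> {..<n}" using S(3) kn by auto
  then obtain t where t: "t < n" "t \<notin> S" using S(1) by auto
  show thesis
  proof (cases "{1..k} \<subseteq> clique_colours c S")
    case True
    then have "card {1..k} \<le> card (clique_colours c (insert t S))"
      using clique_colours_mono[of S "insert t S" c] finS
      by (intro card_mono finite_clique_colours) auto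
    then show thesis using that t S(3) by simp
  next
    case False
    then obtain i where i: "i \<in> {1..k}" "i \<notin> clique_colours c S" by blast
    obtain u where u: "u \<in> S" using S(2) by blast
    obtain w where w: "w < n" "w \<noteq> u" "c {u, w} = i"
      using colour_connected_neighbour[OF connected_colouring_colour_connected[OF cc i(1)], of u t]
        u t S(1) by auto
    have "w \<notin> S" using w i(2) clique_coloursI[OF u, of w c] by auto
    have "Suc (card (clique_colours c S)) = card (insert i (clique_colours c S))"
      using i(2) finS finite_clique_colours by simp
    also have "\<dots> \<le> card (clique_colours c (insert w S))"
      using clique_colours_mono[of S "insert w S" c] clique_coloursI[of u "insert w S" w c] u w finS
      by (intro card_mono finite_clique_colours) auto
    finally show thesis using that w(1) \<open>w \<notin> S\<close> S(4) by simp
  qed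
qed

lemma connected_colouring_many_coloured_clique:
  assumes cc: "connected_colouring n k c" and n: "2 \<le> n" and m: "3 \<le> m" "m \<le> k"
  shows "\<exists>S \<subseteq> {..<n}. card S = m \<and> m \<le> card (clique_colours c S)"
  using m
proof (induction m rule: nat_induct_at_least)
  case base
  have "colour_connected {..<n} c i" if "i \<in> {1, 2, 3}" for i
    using connected_colouring_colour_connected[OF cc] that base by auto
  then have "\<not> rainbow_triangle_free {..<n} c"
    using three_connected_colours_rainbow_triangle[of "{..<n}" c 1 2 3] n by simp
  then obtain x y z where "x < n" "y < n" "z < n" "x \<noteq> y" "y \<noteq> z" "x \<noteq> z"
    "c {x, y} \<noteq> c {x, z}" "c {x, y} \<noteq> c {y, z}" "c {x, z} \<noteq> c {y, z}"
    unfolding rainbow_triangle_free_def by blast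
  then show ?case
    using card_clique_colours_rainbow_triangle by (intro exI[of _ "{x, y, z}"]) auto
next
  case (Suc m)
  then obtain S where S: "S \<subseteq> {..<n}" "card S = m" "m \<le> card (clique_colours c S)" by auto
  moreover have "S \<noteq> {}" "card S < k" using S(2) Suc by auto
  ultimately obtain w where w: "w < n" "w \<notin> S" "Suc m \<le> card (clique_colours c (insert w S))"
    using clique_colours_extend[OF cc connected_colouring_colours_lt[OF cc n]] by metis
  have "finite S" using S(1) finite_subset by blast
  then show ?case using S w by (intro exI[of _ "insert w S"]) auto
qed

definition vertex_colour :: "nat \<Rightarrow> nat \<Rightarrow> nat" where
  "vertex_colour k x = x mod k + 1"

definition block_colouring :: "nat \<Rightarrow> nat set \<Rightarrow> nat" where
  "block_colouring k e =
     vertex_colour k (if Min e < k \<and> 2 * k \<le> Max e then Max e else Min e)"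

lemma block_colouring_pair:
  "block_colouring k {x, y} =
     vertex_colour k (if min x y < k \<and> 2 * k \<le> max x y then max x y else min x y)"
  unfolding block_colouring_def by simp

lemma block_colouring_endpoint: "block_colouring k {x, y} \<in> {vertex_colour k x, vertex_colour k y}"
  unfolding block_colouring_pair by (auto simp: min_def max_def)

lemma card_clique_colours_block_colouring:
  assumes "finite S"
  shows "card (clique_colours (block_colouring k) S) \<le> card S"
proof -
  have "clique_colours (block_colouring k) S \<subseteq> vertex_colour k ` S"
    unfolding clique_colours_def using block_colouring_endpoint by fastforce
  then have "card (clique_colours (block_colouring k) S) \<le> card (vertex_colour k ` S)"
    using assms by (simp add: card_mono)
  also have "\<dots> \<le> card S" using assms card_image_le by blast
  finally show ?thesis .
qed

lemma block_colouring_connected: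
  assumes k: "1 \<le> k" and n: "3 * k \<le> n"
  shows "connected_colouring n k (block_colouring k)"
proof -
  have "edge_colouring n k (block_colouring k)"
    unfolding edge_colouring_def block_colouring_def vertex_colour_def using k by (auto simp: Suc_le_eq)
  moreover have "colour_connected {..<n} (block_colouring k) i" if i: "i \<in> {1..k}" for i
  proof -
    let ?R = "colour_edge {..<n} (block_colouring k) i"
    obtain j where j: "i = Suc j" "j < k" using i by (cases i) auto
    define a b h where "a = j" and "b = k + j" and "h = 2 * k + j"
    have col: "vertex_colour k a = i" "vertex_colour k b = i" "vertex_colour k h = i"
      using j unfolding vertex_colour_def a_def b_def h_def by auto
    have blocks: "a < k" "k \<le> b" "b < 2 * k" "2 * k \<le> h" "h < n"
      using j n unfolding a_def b_def h_def by auto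
    have edge: "?R x y" if "x < n" "y < n" "x \<noteq> y" "block_colouring k {x, y} = i" for x y
      using that unfolding colour_edge_def by simp
    have ba: "?R b a" using blocks col by (intro edge) (auto simp: block_colouring_pair)
    have hb: "?R h b" using blocks col by (intro edge) (auto simp: block_colouring_pair)
    have "?R\<^sup>*\<^sup>* u a" if "u < n" for u
    proof -
      consider "u = a" | "u < k" "u \<noteq> a" | "k \<le> u" "u < 2 * k" | "2 * k \<le> u" by linarith
      then show ?thesis
      proof cases
        case 2
        then have "?R u h" using blocks col that by (intro edge) (auto simp: block_colouring_pair)
        then show ?thesis using hb ba by (meson converse_rtranclp_into_rtranclp rtranclp.rtrancl_refl)
      next
        case 3
        then have "?R u a" using blocks col that by (intro edge) (auto simp: block_colouring_pair)
        then show ?thesis by blast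
      next
        case 4
        then have "?R u b" using blocks col that by (intro edge) (auto simp: block_colouring_pair)
        then show ?thesis using ba by (meson converse_rtranclp_into_rtranclp rtranclp.rtrancl_refl)
      qed simp
    qed
    then show ?thesis by (intro colour_connected_hub) auto
  qed
  ultimately show ?thesis
    unfolding connected_colouring_def colour_class_connected_iff by blast
qed

theorem proposition14:
  fixes d k :: nat
  assumes "3 \<le> d" and "d \<le> k"
  shows "(\<forall>n \<ge> 2. \<forall>c. connected_colouring n k c \<longrightarrow>
            (\<exists>S \<subseteq> {..<n}. card S = d \<and> card (clique_colours c S) \<ge> d))
       \<and> (\<exists>N. \<forall>n \<ge> N. \<exists>c. connected_colouring n k c \<and>
            (\<forall>S \<subseteq> {..<n}. card S = d \<longrightarrow> card (clique_colours c S) \<le> d))"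
proof
  show "\<forall>n \<ge> 2. \<forall>c. connected_colouring n k c \<longrightarrow>
          (\<exists>S \<subseteq> {..<n}. card S = d \<and> card (clique_colours c S) \<ge> d)"
    using connected_colouring_many_coloured_clique assms by blast
  have "connected_colouring n k (block_colouring k) \<and>
      (\<forall>S \<subseteq> {..<n}. card S = d \<longrightarrow> card (clique_colours (block_colouring k) S) \<le> d)"
    if "3 * k \<le> n" for n
    using that assms block_colouring_connected[of k n]
      card_clique_colours_block_colouring[OF finite_subset[OF _ finite_lessThan]]
    by auto
  then show "\<exists>N. \<forall>n \<ge> N. \<exists>c. connected_colouring n k c \<and>
          (\<forall>S \<subseteq> {..<n}. card S = d \<longrightarrow> card (clique_colours c S) \<le> d)"
    by blast
qed

end
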